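(* Let $0\le\lambda<\gamma\le\delta$. Every function in $\mathcal{R}_H^0(\gamma,\delta,\lambda)$ is close-to-convex in $\mathcal{U}$.
   Context: Let $\mathcal{U}=\{z\in\mathbb{C}:|z|<1\}$. $\mathcal{H}^0$ denotes the class of complex-valued harmonic functions $\mathfrak{f}=\mathfrak{s}+\overline{\mathfrak{t}}$ on $\mathcal{U}$, where $\mathfrak{s}(z)=z+\sum_{m\ge2}a_mz^m$ and $\mathfrak{t}(z)=\sum_{m\ge2}b_mz^m$ are analytic in $\mathcal{U}$. For real $0\le\lambda<\gamma\le\delta$, $\mathcal{R}_H^0(\gamma,\delta,\lambda)$ is the class of $\mathfrak{f}=\mathfrak{s}+\overline{\mathfrak{t}}\in\mathcal{H}^0$ such that for all $z\in\mathcal{U}$, $\mathrm{Re}\left[\gamma\mathfrak{s}'(z)+\delta z\mathfrak{s}''(z)+\frac{\delta-\gamma}{2}z^2\mathfrak{s}'''(z)-\lambda\right]>\left|\gamma\mathfrak{t}'(z)+\delta z\mathfrak{t}''(z)+\frac{\delta-\gamma}{2}z^2\mathfrak{t}'''(z)\right|$. A harmonic function is close-to-convex in $\mathcal{U}$ if it is univalent in $\mathcal{U}$ and maps $\mathcal{U}$ onto a close-to-convex domain, i.e. a simply connected domain whose complement in $\mathbb{C}$ is a union of non-crossing half-lines. *)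

theory Defs
  imports "HOL-Complex_Analysis.Complex_Analysis"
begin

abbreviation unit_disc :: "complex set" where
  "unit_disc \<equiv> ball 0 1"

text \<open>Class H^0: f = s + conj t with s, t analytic in U,
  s(z) = z + sum_{m>=2} a_m z^m, t(z) = sum_{m>=2} b_m z^m,
  i.e. s(0)=0, s'(0)=1, t(0)=0, t'(0)=0.\<close>
definition in_H0 :: "(complex \<Rightarrow> complex) \<Rightarrow> (complex \<Rightarrow> complex) \<Rightarrow> bool" where
  "in_H0 s t \<longleftrightarrow> s holomorphic_on unit_disc \<and> t holomorphic_on unit_disc \<and>
     s 0 = 0 \<and> deriv s 0 = 1 \<and> t 0 = 0 \<and> deriv t 0 = 0"

definition harm :: "(complex \<Rightarrow> complex) \<Rightarrow> (complex \<Rightarrow> complex) \<Rightarrow> complex \<Rightarrow> complex" where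
  "harm s t = (\<lambda>z. s z + cnj (t z))"

definition Lop :: "real \<Rightarrow> real \<Rightarrow> (complex \<Rightarrow> complex) \<Rightarrow> complex \<Rightarrow> complex" where
  "Lop \<gamma> \<delta> h z = of_real \<gamma> * deriv h z + of_real \<delta> * z * (deriv ^^ 2) h z
      + of_real ((\<delta> - \<gamma>) / 2) * z ^ 2 * (deriv ^^ 3) h z"

definition in_RH0 :: "real \<Rightarrow> real \<Rightarrow> real \<Rightarrow> (complex \<Rightarrow> complex) \<Rightarrow> (complex \<Rightarrow> complex) \<Rightarrow> bool" where
  "in_RH0 \<gamma> \<delta> lam s t \<longleftrightarrow> in_H0 s t \<and>
     (\<forall>z\<in>unit_disc. Re (Lop \<gamma> \<delta> s z - of_real lam) > norm (Lop \<gamma> \<delta> t z))"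

definition halfline :: "complex \<Rightarrow> complex \<Rightarrow> complex set" where
  "halfline a e = {a + of_real r * e | r. 0 \<le> r}"

definition halflines_cross :: "complex \<times> complex \<Rightarrow> complex \<times> complex \<Rightarrow> bool" where
  "halflines_cross l1 l2 \<longleftrightarrow>
     (\<exists>p. halfline (fst l1) (snd l1) \<inter> halfline (fst l2) (snd l2) = {p}
          \<and> p \<noteq> fst l1 \<and> p \<noteq> fst l2)"

definition close_to_convex_domain :: "complex set \<Rightarrow> bool" where
  "close_to_convex_domain D \<longleftrightarrow> open D \<and> connected D \<and> simply_connected D \<and>
     (\<exists>L :: (complex \<times> complex) set.
        (\<forall>l\<in>L. snd l \<noteq> 0) \<and>
        (\<forall>l1\<in>L. \<forall>l2\<in>L. \<not> halflines_cross l1 l2) \<and>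
        (\<Union>l\<in>L. halfline (fst l) (snd l)) = - D)"

definition close_to_convex_on :: "(complex \<Rightarrow> complex) \<Rightarrow> complex set \<Rightarrow> bool" where
  "close_to_convex_on f A \<longleftrightarrow> inj_on f A \<and> close_to_convex_domain (f ` A)"

end

theory Submission
  imports Defs
begin

text \<open>
  For \<open>|\<epsilon>| \<le> 1\<close> put \<open>F = s' + \<epsilon> t'\<close> and \<open>G = (z F)'\<close>. The defining inequality of the class
  makes \<open>Re (Lop s + \<epsilon> Lop t) > 0\<close>, and this Euler-type operator factors as \<open>\<gamma> (G + c z G')\<close>
  with \<open>c \<ge> 0\<close>. Applying twice the principle "\<open>Re (H + c z H') > 0\<close> on the disc implies
  \<open>Re H > 0\<close>" (a first-zero argument along radii) gives \<open>Re (s' + \<epsilon> t') > 0\<close>, that is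
  \<open>Re s' > |t'|\<close>. Then \<open>f = s + conj t\<close> is strictly monotone, \<open>\<langle>z\<^sub>2 - z\<^sub>1, f z\<^sub>2 - f z\<^sub>1\<rangle> > 0\<close>, by the
  mean value theorem on segments; so \<open>f\<close> is injective and, by invariance of domain, a homeomorphism
  onto an open simply connected set. For \<open>w \<notin> f(U)\<close> a variational inequality, solved with
  Brouwer's theorem on smaller discs and passed to the limit, yields a unit vector \<open>\<zeta>\<close> with
  \<open>\<langle>z - \<zeta>, f z - w\<rangle> \<ge> 0\<close> on \<open>U\<close>: the half-line from \<open>w\<close> in direction \<open>\<zeta>\<close> misses \<open>f(U)\<close>, and
  monotonicity of \<open>w \<mapsto> \<zeta>\<close> keeps two such half-lines from crossing.
\<close>

lemma has_real_derivative_Re_along_line: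
  fixes K :: "complex \<Rightarrow> complex" and a w K' :: complex and x :: real
  assumes "(K has_field_derivative K') (at (a + of_real x * w))"
  shows "((\<lambda>x. Re (K (a + of_real x * w))) has_real_derivative Re (K' * w)) (at x)"
proof -
  have "((\<lambda>\<xi>. a + \<xi> * w) has_field_derivative w) (at (of_real x))"
    by (auto intro!: derivative_eq_intros)
  from DERIV_chain2[OF assms this]
  have "((\<lambda>\<xi>. K (a + \<xi> * w)) has_field_derivative K' * w) (at (of_real x))"
    by simp
  then show ?thesis
    by (intro has_field_derivative_Re has_vector_derivative_real_field)
qed

lemma pos_if_add_scaled_deriv_pos:
  fixes \<phi> \<phi>' :: "real \<Rightarrow> real" and c :: real
  assumes "c \<ge> 0"
    and deriv: "\<And>x. 0 \<le> x \<Longrightarrow> x \<le> 1 \<Longrightarrow> (\<phi> has_real_derivative \<phi>' x) (at x)"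
    and pos: "\<And>x. 0 \<le> x \<Longrightarrow> x \<le> 1 \<Longrightarrow> \<phi> x + c * x * \<phi>' x > 0"
  shows "\<phi> 1 > 0"
proof (rule ccontr)
  assume "\<not> \<phi> 1 > 0"
  define S where "S = {0..1} \<inter> \<phi> -` {..0}"
  have "continuous_on {0..1} \<phi>"
    using deriv by (intro continuous_at_imp_continuous_on) (meson DERIV_isCont atLeastAtMost_iff)
  then have "closed S"
    unfolding S_def by (rule continuous_closed_preimage) auto
  moreover have "bounded S"
    unfolding S_def by (intro bounded_Int disjI1 bounded_closed_interval)
  ultimately have "compact S"
    by (simp add: compact_eq_bounded_closed)
  moreover have "1 \<in> S"
    using \<open>\<not> \<phi> 1 > 0\<close> by (simp add: S_def)
  ultimately obtain \<tau> where "\<tau> \<in> S" and \<tau>_least: "\<forall>y\<in>S. \<tau> \<le> y"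
    using compact_attains_inf by (metis empty_iff)
  then have \<tau>: "0 \<le> \<tau>" "\<tau> \<le> 1" "\<phi> \<tau> \<le> 0"
    by (auto simp: S_def)
  \<comment> \<open>At the first point \<open>\<tau>\<close> where \<open>\<phi> \<le> 0\<close> the hypothesis forces \<open>\<phi>' \<tau> > 0\<close>, so \<open>\<phi>\<close> was already
    negative just before \<open>\<tau>\<close>.\<close>
  have "\<tau> > 0"
    using pos[of 0] \<tau> by (cases "\<tau> = 0") auto
  have "c * \<tau> * \<phi>' \<tau> > 0"
    using pos[of \<tau>] \<tau> by linarith
  moreover have "c * \<tau> \<ge> 0"
    using \<open>c \<ge> 0\<close> \<open>\<tau> > 0\<close> by simp
  ultimately have "\<phi>' \<tau> > 0"
    by (auto simp: zero_less_mult_iff)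
  then obtain d where "d > 0" and d: "\<And>h. 0 < h \<Longrightarrow> h < d \<Longrightarrow> \<phi> (\<tau> - h) < \<phi> \<tau>"
    using DERIV_pos_inc_left[OF deriv[OF \<tau>(1,2)]] by blast
  define h where "h = min (d / 2) \<tau>"
  have "0 < h" "h < d" "h \<le> \<tau>"
    using \<open>d > 0\<close> \<open>\<tau> > 0\<close> by (auto simp: h_def)
  then have "\<tau> - h \<in> S"
    using d[of h] \<tau> by (auto simp: S_def)
  then show False
    using \<tau>_least \<open>0 < h\<close> by force
qed

lemma Re_pos_if_Re_add_z_deriv_pos:
  fixes H H' :: "complex \<Rightarrow> complex" and c r :: real
  assumes "c \<ge> 0"
    and deriv: "\<And>z. z \<in> ball 0 r \<Longrightarrow> (H has_field_derivative H' z) (at z)"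
    and pos: "\<And>z. z \<in> ball 0 r \<Longrightarrow> Re (H z + of_real c * z * H' z) > 0"
    and "z \<in> ball 0 r"
  shows "Re (H z) > 0"
proof -
  have on_radius: "of_real x * z \<in> ball 0 r" if "0 \<le> x" "x \<le> 1" for x
  proof -
    have "norm (of_real x * z) \<le> norm z"
      using that by (simp add: norm_mult mult_left_le_one_le)
    then show ?thesis
      using \<open>z \<in> ball 0 r\<close> by simp
  qed
  have "(\<lambda>x. Re (H (0 + of_real x * z))) 1 > 0"
  proof (rule pos_if_add_scaled_deriv_pos[OF \<open>c \<ge> 0\<close>])
    fix x :: real assume "0 \<le> x" "x \<le> 1"
    show "((\<lambda>x. Re (H (0 + of_real x * z))) has_real_derivative Re (H' (of_real x * z) * z)) (at x)"
      using deriv[OF on_radius] \<open>0 \<le> x\<close> \<open>x \<le> 1\<close> by (intro has_real_derivative_Re_along_line) auto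
    have "Re (of_real c * (of_real x * z) * H' (of_real x * z)) = c * x * Re (H' (of_real x * z) * z)"
      by (simp add: algebra_simps)
    then show "Re (H (0 + of_real x * z)) + c * x * Re (H' (of_real x * z) * z) > 0"
      using pos[OF on_radius[OF \<open>0 \<le> x\<close> \<open>x \<le> 1\<close>]] by simp
  qed
  then show ?thesis
    by simp
qed

lemma Re_pos_if_Re_euler_operator_pos:
  fixes F F' F'' :: "complex \<Rightarrow> complex" and \<gamma> \<delta> r :: real
  assumes "0 < \<gamma>" "\<gamma> \<le> \<delta>"
    and F: "\<And>z. z \<in> ball 0 r \<Longrightarrow> (F has_field_derivative F' z) (at z)"
    and F': "\<And>z. z \<in> ball 0 r \<Longrightarrow> (F' has_field_derivative F'' z) (at z)"
    and pos: "\<And>z. z \<in> ball 0 r \<Longrightarrow>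
      Re (of_real \<gamma> * F z + of_real \<delta> * z * F' z + of_real ((\<delta> - \<gamma>) / 2) * z ^ 2 * F'' z) > 0"
    and "z \<in> ball 0 r"
  shows "Re (F z) > 0"
proof -
  \<comment> \<open>With \<open>G = (z F)'\<close> the operator factors as \<open>\<gamma> (G + c z G')\<close>, \<open>c = (\<delta> - \<gamma>) / (2 \<gamma>)\<close>.\<close>
  define G where "G z = F z + z * F' z" for z
  define G' where "G' z = 2 * F' z + z * F'' z" for z
  define c where "c = (\<delta> - \<gamma>) / (2 * \<gamma>)"
  have "c \<ge> 0"
    using assms(1,2) by (simp add: c_def)
  have G: "(G has_field_derivative G' z) (at z)" if "z \<in> ball 0 r" for z
    using F[OF that] F'[OF that] unfolding G_def G'_def
    by (auto intro!: derivative_eq_intros simp: algebra_simps)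
  have "Re (G z + of_real c * z * G' z) > 0" if "z \<in> ball 0 r" for z
  proof -
    have "of_real \<gamma> * (G z + of_real c * z * G' z) =
        of_real \<gamma> * F z + of_real \<delta> * z * F' z + of_real ((\<delta> - \<gamma>) / 2) * z ^ 2 * F'' z"
      using \<open>0 < \<gamma>\<close> by (simp add: G_def G'_def c_def field_simps power2_eq_square)
    then have "\<gamma> * Re (G z + of_real c * z * G' z) > 0"
      using pos[OF that] by (metis scaleR_complex.sel(1) scaleR_conv_of_real)
    with \<open>0 < \<gamma>\<close> show ?thesis
      by (simp add: zero_less_mult_iff)
  qed
  then have "Re (G z) > 0" if "z \<in> ball 0 r" for z
    using Re_pos_if_Re_add_z_deriv_pos[OF \<open>c \<ge> 0\<close> G] that by blast
  then show ?thesis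
    using Re_pos_if_Re_add_z_deriv_pos[of 1 r F F' z] F \<open>z \<in> ball 0 r\<close> by (simp add: G_def)
qed

lemma Re_gt_norm_if_Re_add_mult_pos:
  fixes a b :: complex
  assumes "\<And>\<epsilon>. norm \<epsilon> \<le> 1 \<Longrightarrow> Re (a + \<epsilon> * b) > 0"
  shows "Re a > norm b"
proof (cases "b = 0")
  case True
  then show ?thesis
    using assms[of 0] by simp
next
  case False
  have "norm (- of_real (norm b) / b) \<le> 1" "- of_real (norm b) / b * b = - of_real (norm b)"
    using False by (simp_all add: norm_divide)
  then show ?thesis
    using assms[of "- of_real (norm b) / b"] by simp
qed

lemma Re_deriv_gt_norm_deriv_if_in_RH0:
  assumes "0 \<le> lam" "lam < \<gamma>" "\<gamma> \<le> \<delta>" "in_RH0 \<gamma> \<delta> lam s t" "z \<in> unit_disc"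
  shows "Re (deriv s z) > norm (deriv t z)"
proof (rule Re_gt_norm_if_Re_add_mult_pos)
  fix \<epsilon> :: complex assume "norm \<epsilon> \<le> 1"
  have hol: "s holomorphic_on unit_disc" "t holomorphic_on unit_disc"
    and RH0: "\<And>z. z \<in> unit_disc \<Longrightarrow> Re (Lop \<gamma> \<delta> s z - of_real lam) > norm (Lop \<gamma> \<delta> t z)"
    using \<open>in_RH0 \<gamma> \<delta> lam s t\<close> by (auto simp: in_RH0_def in_H0_def)
  have hol_derivs: "(deriv ^^ k) s holomorphic_on unit_disc" "(deriv ^^ k) t holomorphic_on unit_disc" for k
    using hol by (auto intro: holomorphic_higher_deriv)
  have has_deriv: "((deriv ^^ k) h has_field_derivative (deriv ^^ Suc k) h z) (at z)"
    if "(deriv ^^ k) h holomorphic_on unit_disc" "z \<in> unit_disc" for h k z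
    using that by (auto intro!: holomorphic_derivI)
  define F where "F k z = (deriv ^^ k) s z + \<epsilon> * (deriv ^^ k) t z" for k z
  have F: "(F k has_field_derivative F (Suc k) z) (at z)" if "z \<in> unit_disc" for k z
    using has_deriv[OF hol_derivs(1) that, of k] has_deriv[OF hol_derivs(2) that, of k]
    unfolding F_def by (auto intro!: derivative_eq_intros simp del: funpow.simps)
  have "Re (Lop \<gamma> \<delta> s z + \<epsilon> * Lop \<gamma> \<delta> t z) > 0" if "z \<in> unit_disc" for z
  proof -
    have "norm (\<epsilon> * Lop \<gamma> \<delta> t z) \<le> norm (Lop \<gamma> \<delta> t z)"
      using \<open>norm \<epsilon> \<le> 1\<close> by (simp add: norm_mult mult_left_le_one_le)
    then show ?thesis
      using RH0[OF that] \<open>0 \<le> lam\<close> abs_Re_le_cmod[of "\<epsilon> * Lop \<gamma> \<delta> t z"] by simp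
  qed
  moreover have "Lop \<gamma> \<delta> s z + \<epsilon> * Lop \<gamma> \<delta> t z =
      of_real \<gamma> * F 1 z + of_real \<delta> * z * F 2 z + of_real ((\<delta> - \<gamma>) / 2) * z ^ 2 * F 3 z" for z
    by (simp add: Lop_def F_def field_simps)
  ultimately have "Re (F 1 z) > 0"
    using \<open>0 \<le> lam\<close> \<open>lam < \<gamma>\<close> \<open>\<gamma> \<le> \<delta>\<close> \<open>z \<in> unit_disc\<close> F
    by (intro Re_pos_if_Re_euler_operator_pos[of \<gamma> \<delta> 1 "F 1" "F 2" "F 3"]) (auto simp: numeral_eq_Suc)
  then show "Re (deriv s z + \<epsilon> * deriv t z) > 0"
    by (simp add: F_def)
qed

lemma inner_diff_harm_pos:
  assumes "open S" "convex S" "s holomorphic_on S" "t holomorphic_on S"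
    and deriv_gt: "\<And>z. z \<in> S \<Longrightarrow> Re (deriv s z) > norm (deriv t z)"
    and "z1 \<in> S" "z2 \<in> S" "z1 \<noteq> z2"
  shows "inner (z2 - z1) (harm s t z2 - harm s t z1) > 0"
proof -
  define w where "w = z2 - z1"
  \<comment> \<open>\<open>Re (K z) = \<langle>w, harm s t z\<rangle>\<close>, because \<open>\<langle>w, cnj b\<rangle> = Re (w b)\<close>.\<close>
  define K where "K \<zeta> = cnj w * s \<zeta> + w * t \<zeta>" for \<zeta>
  define K' where "K' \<zeta> = cnj w * deriv s \<zeta> + w * deriv t \<zeta>" for \<zeta>
  define u where "u x = z1 + of_real x * w" for x
  have u: "u x \<in> S" if "0 \<le> x" "x \<le> 1" for x
  proof -
    have "u x = (1 - x) *\<^sub>R z1 + x *\<^sub>R z2"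
      by (simp add: u_def w_def scaleR_conv_of_real algebra_simps)
    then show ?thesis
      using convexD_alt[OF \<open>convex S\<close> \<open>z1 \<in> S\<close> \<open>z2 \<in> S\<close> that] by simp
  qed
  have holomorphic_deriv_at: "(h has_field_derivative deriv h z) (at z)"
    if "h holomorphic_on S" "z \<in> S" for h z
    using that \<open>open S\<close> by (auto intro: holomorphic_derivI)
  have "((\<lambda>x. Re (K (u x))) has_real_derivative Re (K' (u x) * w)) (at x)"
    if "0 \<le> x" "x \<le> 1" for x
    unfolding u_def K_def K'_def
    using holomorphic_deriv_at[OF \<open>s holomorphic_on S\<close> u[OF that]]
      holomorphic_deriv_at[OF \<open>t holomorphic_on S\<close> u[OF that]]
    by (intro has_real_derivative_Re_along_line) (auto simp: u_def intro!: derivative_eq_intros)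
  moreover have deriv_pos: "Re (K' (u x) * w) > 0" if "0 \<le> x" "x \<le> 1" for x
  proof -
    have "K' (u x) * w = (cnj w * w) * deriv s (u x) + w * w * deriv t (u x)"
      by (simp add: K'_def algebra_simps)
    also have "cnj w * w = of_real ((norm w)\<^sup>2)"
      by (simp only: complex_norm_square mult.commute)
    finally have "K' (u x) * w = of_real ((norm w)\<^sup>2) * deriv s (u x) + w * w * deriv t (u x)" .
    moreover have "Re (w * w * deriv t (u x)) \<ge> - ((norm w)\<^sup>2 * norm (deriv t (u x)))"
      using abs_Re_le_cmod[of "w * w * deriv t (u x)"] by (simp add: norm_mult power2_eq_square)
    moreover have "(norm w)\<^sup>2 * norm (deriv t (u x)) < (norm w)\<^sup>2 * Re (deriv s (u x))"
      using deriv_gt[OF u[OF that]] \<open>z1 \<noteq> z2\<close> by (simp add: w_def)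
    ultimately show ?thesis
      by simp
  qed
  ultimately obtain \<xi> where "0 < \<xi>" "\<xi> < 1"
    and "Re (K (u 1)) - Re (K (u 0)) = Re (K' (u \<xi>) * w)"
    using MVT2[of 0 1 "\<lambda>x. Re (K (u x))" "\<lambda>x. Re (K' (u x) * w)"] by force
  moreover have "Re (K (u 1)) - Re (K (u 0)) = inner (z2 - z1) (harm s t z2 - harm s t z1)"
    by (simp add: u_def w_def K_def harm_def inner_complex_def algebra_simps)
  ultimately show ?thesis
    using deriv_pos[of \<xi>] by simp
qed

lemma variational_inequality_solution_exists:
  fixes g :: "'a::euclidean_space \<Rightarrow> 'a"
  assumes "compact K" "convex K" "K \<noteq> {}" "continuous_on K g"
  obtains \<zeta> where "\<zeta> \<in> K" "\<And>y. y \<in> K \<Longrightarrow> inner (y - \<zeta>) (g \<zeta>) \<ge> 0"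
proof -
  \<comment> \<open>A fixed point of the projected step \<open>x \<mapsto> P\<^sub>K (x - g x)\<close> solves the inequality.\<close>
  define P where "P x = closest_point K (x - g x)" for x
  have "closed K"
    using \<open>compact K\<close> by (rule compact_imp_closed)
  have "continuous_on K P"
    unfolding P_def using \<open>continuous_on K g\<close>
    by (intro continuous_on_compose2[OF continuous_on_closest_point[OF \<open>convex K\<close> \<open>closed K\<close> \<open>K \<noteq> {}\<close>]]
        continuous_intros) auto
  moreover have "P \<in> K \<rightarrow> K"
    using closest_point_in_set[OF \<open>closed K\<close> \<open>K \<noteq> {}\<close>] by (simp add: P_def)
  ultimately obtain \<zeta> where "\<zeta> \<in> K" "P \<zeta> = \<zeta>"
    using brouwer[OF \<open>compact K\<close> \<open>convex K\<close> \<open>K \<noteq> {}\<close>] by blast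
  moreover have "inner (y - \<zeta>) (g \<zeta>) \<ge> 0" if "y \<in> K" for y
    using closest_point_dot[OF \<open>convex K\<close> \<open>closed K\<close> that, of "\<zeta> - g \<zeta>"] \<open>P \<zeta> = \<zeta>\<close>
    by (simp add: P_def inner_commute inner_diff_right)
  ultimately show ?thesis
    using that by blast
qed

lemma eq_if_inner_nonneg_on_open:
  fixes f :: "'a::real_inner \<Rightarrow> 'a"
  assumes "open U" "l \<in> U" "isCont f l"
    and nonneg: "\<And>z. z \<in> U \<Longrightarrow> inner (z - l) (f z - w) \<ge> 0"
  shows "f l = w"
proof -
  \<comment> \<open>Test the inequality at \<open>z = l - e (f l - w)\<close> and let \<open>e \<rightarrow> 0\<^sup>+\<close>.\<close>
  define v where "v = f l - w"
  have to_l: "((\<lambda>e. l - e *\<^sub>R v) \<longlongrightarrow> l) (at_right 0)"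
    by (auto intro!: tendsto_eq_intros)
  then have "eventually (\<lambda>e. l - e *\<^sub>R v \<in> U) (at_right 0)"
    using \<open>open U\<close> \<open>l \<in> U\<close> by (rule topological_tendstoD)
  then have "eventually (\<lambda>e. inner v (f (l - e *\<^sub>R v) - w) \<le> 0) (at_right (0::real))"
    using eventually_at_right_less[of 0]
  proof eventually_elim
    case (elim e)
    then show ?case
      using nonneg[OF elim(1)] by (auto simp: mult_le_0_iff)
  qed
  moreover have "((\<lambda>e. inner v (f (l - e *\<^sub>R v) - w)) \<longlongrightarrow> inner v v) (at_right 0)"
    using isCont_tendsto_compose[OF \<open>isCont f l\<close> to_l] by (auto intro!: tendsto_eq_intros simp: v_def)
  ultimately have "inner v v \<le> 0"
    by (intro tendsto_upperbound) auto
  then show ?thesis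
    by (simp add: v_def inner_gt_zero_iff[symmetric] not_less[symmetric])
qed

lemma monotone_map_unit_direction_exists:
  fixes f :: "'a::euclidean_space \<Rightarrow> 'a"
  assumes cont: "continuous_on (ball 0 1) f"
    and mono: "\<And>x y. x \<in> ball 0 1 \<Longrightarrow> y \<in> ball 0 1 \<Longrightarrow> inner (y - x) (f y - f x) \<ge> 0"
    and "w \<notin> f ` ball 0 1"
  obtains \<zeta> where "norm \<zeta> = 1" "\<And>z. z \<in> ball 0 1 \<Longrightarrow> inner (z - \<zeta>) (f z - w) \<ge> 0"
proof -
  define r where "r n = 1 - 1 / (real n + 2)" for n
  have r: "0 < r n" "r n < 1" for n
    by (auto simp: r_def field_simps)
  have "\<exists>\<zeta>\<in>cball 0 (r n). \<forall>y\<in>cball 0 (r n). inner (y - \<zeta>) (f y - w) \<ge> 0" for n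
  proof -
    have sub: "cball 0 (r n) \<subseteq> ball 0 1"
      using r[of n] by auto
    obtain \<zeta> where \<zeta>: "\<zeta> \<in> cball 0 (r n)" "\<And>y. y \<in> cball 0 (r n) \<Longrightarrow> inner (y - \<zeta>) (f \<zeta> - w) \<ge> 0"
      using r[of n] continuous_on_subset[OF cont sub]
      by (rule_tac variational_inequality_solution_exists[of "cball 0 (r n)" "\<lambda>x. f x - w"])
         (auto intro: continuous_intros)
    \<comment> \<open>Minty's trick: by monotonicity the inequality at \<open>\<zeta>\<close> transfers to every \<open>y\<close>.\<close>
    have "inner (y - \<zeta>) (f y - w) \<ge> 0" if "y \<in> cball 0 (r n)" for y
      using \<zeta>(2)[OF that] mono[of \<zeta> y] subsetD[OF sub that] subsetD[OF sub \<zeta>(1)]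
      by (simp add: inner_diff_right)
    with \<zeta>(1) show ?thesis
      by blast
  qed
  then obtain Z where Z: "\<And>n. Z n \<in> cball 0 (r n)"
    and Z_ineq: "\<And>n y. y \<in> cball 0 (r n) \<Longrightarrow> inner (y - Z n) (f y - w) \<ge> 0"
    by metis
  have "Z n \<in> cball 0 1" for n
    using Z[of n] r[of n] by auto
  then obtain l h where "l \<in> cball 0 1" "strict_mono h" and lim: "(Z \<circ> h) \<longlonglongrightarrow> l"
    using compact_imp_seq_compact[OF compact_cball] unfolding seq_compact_def by metis
  have l_ineq: "inner (z - l) (f z - w) \<ge> 0" if "z \<in> ball 0 1" for z
  proof -
    have "r \<longlonglongrightarrow> 1"
      unfolding r_def by real_asymp
    then have "eventually (\<lambda>n. norm z < r n) sequentially"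
      using \<open>z \<in> ball 0 1\<close> by (intro order_tendstoD) auto
    then have "eventually (\<lambda>n. norm z < r (h n)) sequentially"
      using filterlim_subseq[OF \<open>strict_mono h\<close>] by (rule eventually_compose_filterlim)
    then have "eventually (\<lambda>n. inner (z - (Z \<circ> h) n) (f z - w) \<ge> 0) sequentially"
      by eventually_elim (auto intro: Z_ineq)
    moreover have "(\<lambda>n. inner (z - (Z \<circ> h) n) (f z - w)) \<longlonglongrightarrow> inner (z - l) (f z - w)"
      by (intro tendsto_intros lim)
    ultimately show ?thesis
      by (intro tendsto_lowerbound) auto
  qed
  have "norm l = 1"
  proof (rule ccontr)
    assume "norm l \<noteq> 1"
    then have "l \<in> ball 0 1"
      using \<open>l \<in> cball 0 1\<close> by simp
    then have "f l = w"
      using cont l_ineq by (intro eq_if_inner_nonneg_on_open[of "ball 0 1"]) (auto simp: continuous_on_eq_continuous_at)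
    then show False
      using \<open>w \<notin> f ` ball 0 1\<close> \<open>l \<in> ball 0 1\<close> by blast
  qed
  with l_ineq show ?thesis
    using that by blast
qed

definition supporting_halflines :: "(complex \<Rightarrow> complex) \<Rightarrow> (complex \<times> complex) set" where
  "supporting_halflines f = {(w, \<zeta>). w \<notin> f ` unit_disc \<and> norm \<zeta> = 1 \<and>
     (\<forall>z\<in>unit_disc. inner (z - \<zeta>) (f z - w) \<ge> 0)}"

lemma mem_halfline_iff: "x \<in> halfline a e \<longleftrightarrow> (\<exists>r\<ge>0. x = a + of_real r * e)"
  by (auto simp: halfline_def)

lemma inner_lt_one_if_unit_neq:
  fixes a b :: "'a::real_inner"
  assumes "norm a = 1" "norm b = 1" "a \<noteq> b"
  shows "inner a b < 1"
proof -
  have "0 < (norm (a - b))\<^sup>2"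
    using assms(3) by simp
  also have "(norm (a - b))\<^sup>2 = 2 - 2 * inner a b"
    using assms(1,2) by (simp add: norm_eq_1 power2_norm_eq_inner inner_diff inner_commute)
  finally show ?thesis
    by simp
qed

lemma halfline_supporting_disjoint_image:
  assumes "(w, \<zeta>) \<in> supporting_halflines f"
  shows "halfline w \<zeta> \<inter> f ` unit_disc = {}"
proof -
  have "x \<notin> f ` unit_disc" if "x \<in> halfline w \<zeta>" for x
  proof
    assume "x \<in> f ` unit_disc"
    then obtain z where "z \<in> unit_disc" "x = f z"
      by blast
    obtain \<rho> where "0 \<le> \<rho>" and x: "x = w + of_real \<rho> * \<zeta>"
      using \<open>x \<in> halfline w \<zeta>\<close> by (auto simp: mem_halfline_iff)
    have "norm \<zeta> = 1" "w \<notin> f ` unit_disc" and ineq: "inner (z - \<zeta>) (f z - w) \<ge> 0"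
      using assms \<open>z \<in> unit_disc\<close> by (auto simp: supporting_halflines_def)
    have "inner z \<zeta> < 1"
      using norm_cauchy_schwarz[of z \<zeta>] \<open>norm \<zeta> = 1\<close> \<open>z \<in> unit_disc\<close> by simp
    moreover have "inner (z - \<zeta>) (f z - w) = \<rho> * (inner z \<zeta> - 1)"
    proof -
      have "f z - w = \<rho> *\<^sub>R \<zeta>"
        using x \<open>x = f z\<close> by (simp add: scaleR_conv_of_real)
      then show ?thesis
        using \<open>norm \<zeta> = 1\<close> by (simp add: norm_eq_1 inner_diff_left right_diff_distrib)
    qed
    ultimately have "\<rho> = 0"
      using ineq \<open>0 \<le> \<rho>\<close> mult_pos_neg[of \<rho> "inner z \<zeta> - 1"] by fastforce
    then have "f z = w"
      using x \<open>x = f z\<close> by simp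
    then show False
      using \<open>z \<in> unit_disc\<close> \<open>w \<notin> f ` unit_disc\<close> by blast
  qed
  then show ?thesis
    by blast
qed

lemma supporting_halflines_monotone:
  assumes "(w1, \<zeta>1) \<in> supporting_halflines f" "(w2, \<zeta>2) \<in> supporting_halflines f"
  shows "inner (w2 - w1) (\<zeta>2 - \<zeta>1) \<ge> 0"
proof (cases "\<zeta>1 = \<zeta>2")
  case False
  have unit: "norm \<zeta>1 = 1" "norm \<zeta>2 = 1"
    using assms by (auto simp: supporting_halflines_def)
  define m where "m = (\<zeta>1 + \<zeta>2) / 2"
  have "(norm (\<zeta>1 + \<zeta>2))\<^sup>2 < 2\<^sup>2"
    using inner_lt_one_if_unit_neq[OF unit False] unit
    by (simp add: norm_eq_1 power2_norm_eq_inner inner_add inner_commute)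
  then have "norm (\<zeta>1 + \<zeta>2) < 2"
    by (rule power_less_imp_less_base) simp
  then have "m \<in> unit_disc"
    by (simp add: m_def norm_divide)
  then have "inner (m - \<zeta>1) (f m - w1) \<ge> 0" "inner (m - \<zeta>2) (f m - w2) \<ge> 0"
    using assms by (auto simp: supporting_halflines_def)
  moreover have "m - \<zeta>1 = (1/2) *\<^sub>R (\<zeta>2 - \<zeta>1)" "m - \<zeta>2 = - (1/2) *\<^sub>R (\<zeta>2 - \<zeta>1)"
    by (simp_all add: m_def scaleR_conv_of_real field_simps)
  ultimately show ?thesis
    by (simp add: inner_diff_right inner_commute)
qed simp

lemma supporting_halflines_not_cross:
  assumes "(w1, \<zeta>1) \<in> supporting_halflines f" "(w2, \<zeta>2) \<in> supporting_halflines f"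
  shows "\<not> halflines_cross (w1, \<zeta>1) (w2, \<zeta>2)"
proof
  assume "halflines_cross (w1, \<zeta>1) (w2, \<zeta>2)"
  then obtain p where p: "halfline w1 \<zeta>1 \<inter> halfline w2 \<zeta>2 = {p}" "p \<noteq> w1" "p \<noteq> w2"
    by (auto simp: halflines_cross_def)
  then have "p \<in> halfline w1 \<zeta>1" "p \<in> halfline w2 \<zeta>2"
    by auto
  then obtain \<rho>1 \<rho>2 where \<rho>: "p = w1 + of_real \<rho>1 * \<zeta>1" "p = w2 + of_real \<rho>2 * \<zeta>2" "0 \<le> \<rho>1" "0 \<le> \<rho>2"
    unfolding mem_halfline_iff by blast
  with p(2,3) have "0 < \<rho>1" "0 < \<rho>2"
    by (auto simp: order_le_less)
  have unit: "norm \<zeta>1 = 1" "norm \<zeta>2 = 1"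
    using assms by (auto simp: supporting_halflines_def)
  show False
  proof (cases "\<zeta>1 = \<zeta>2")
    case True
    \<comment> \<open>Parallel half-lines that meet share a whole ray, not a single point.\<close>
    have "p + \<zeta>1 = w1 + of_real (\<rho>1 + 1) * \<zeta>1" "p + \<zeta>1 = w2 + of_real (\<rho>2 + 1) * \<zeta>2"
      using \<rho> True by (simp_all add: algebra_simps)
    then have "p + \<zeta>1 \<in> halfline w1 \<zeta>1 \<inter> halfline w2 \<zeta>2"
      using \<rho>(3,4) unfolding mem_halfline_iff Int_iff by (metis add_nonneg_nonneg zero_le_one)
    with p(1) unit show False
      by auto
  next
    case False
    have w: "w2 - w1 = \<rho>1 *\<^sub>R \<zeta>1 - \<rho>2 *\<^sub>R \<zeta>2"
      using \<rho> by (simp add: scaleR_conv_of_real algebra_simps)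
    have "inner (w2 - w1) (\<zeta>2 - \<zeta>1) = (\<rho>1 + \<rho>2) * (inner \<zeta>1 \<zeta>2 - 1)"
      using unit unfolding w by (simp add: norm_eq_1 inner_diff inner_commute algebra_simps)
    also have "\<dots> < 0"
      using \<open>0 < \<rho>1\<close> \<open>0 < \<rho>2\<close> inner_lt_one_if_unit_neq[OF unit False] by (simp add: mult_pos_neg)
    finally show False
      using supporting_halflines_monotone[OF assms] by simp
  qed
qed

lemma Union_supporting_halflines:
  assumes "continuous_on unit_disc f"
    and "\<And>x y. x \<in> unit_disc \<Longrightarrow> y \<in> unit_disc \<Longrightarrow> inner (y - x) (f y - f x) \<ge> 0"
  shows "(\<Union>(w, \<zeta>)\<in>supporting_halflines f. halfline w \<zeta>) = - f ` unit_disc"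
proof
  show "(\<Union>(w, \<zeta>)\<in>supporting_halflines f. halfline w \<zeta>) \<subseteq> - f ` unit_disc"
    using halfline_supporting_disjoint_image by blast
  show "- f ` unit_disc \<subseteq> (\<Union>(w, \<zeta>)\<in>supporting_halflines f. halfline w \<zeta>)"
  proof
    fix w assume "w \<in> - f ` unit_disc"
    then obtain \<zeta> where "norm \<zeta> = 1" "\<And>z. z \<in> unit_disc \<Longrightarrow> inner (z - \<zeta>) (f z - w) \<ge> 0"
      using monotone_map_unit_direction_exists[OF assms] by blast
    then have "(w, \<zeta>) \<in> supporting_halflines f"
      using \<open>w \<in> - f ` unit_disc\<close> by (auto simp: supporting_halflines_def)
    moreover have "w \<in> halfline w \<zeta>"
      unfolding mem_halfline_iff by (auto intro!: exI[of _ 0])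
    ultimately show "w \<in> (\<Union>(w, \<zeta>)\<in>supporting_halflines f. halfline w \<zeta>)"
      by blast
  qed
qed

lemma close_to_convex_on_if_strictly_monotone:
  fixes f :: "complex \<Rightarrow> complex"
  assumes cont: "continuous_on unit_disc f"
    and mono: "\<And>x y. x \<in> unit_disc \<Longrightarrow> y \<in> unit_disc \<Longrightarrow> x \<noteq> y \<Longrightarrow> inner (y - x) (f y - f x) > 0"
  shows "close_to_convex_on f unit_disc"
proof -
  have "inj_on f unit_disc"
    using mono by (fastforce intro: inj_onI)
  then obtain g where "homeomorphism unit_disc (f ` unit_disc) f g"
    using invariance_of_domain_homeomorphism[OF open_ball cont] by auto
  then have "simply_connected (f ` unit_disc)"
    using homeomorphic_simply_connected_eq convex_imp_simply_connected[OF convex_ball]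
    unfolding homeomorphic_def by blast
  moreover have "open (f ` unit_disc)"
    using invariance_of_domain[OF cont open_ball \<open>inj_on f unit_disc\<close>] .
  moreover have "connected (f ` unit_disc)"
    using connected_continuous_image[OF cont connected_ball] .
  moreover have "(\<Union>(w, \<zeta>)\<in>supporting_halflines f. halfline w \<zeta>) = - f ` unit_disc"
  proof (rule Union_supporting_halflines[OF cont])
    show "inner (y - x) (f y - f x) \<ge> 0" if "x \<in> unit_disc" "y \<in> unit_disc" for x y
      using mono[OF that] by (cases "x = y") auto
  qed
  moreover have "\<forall>l\<in>supporting_halflines f. snd l \<noteq> 0"
    by (auto simp: supporting_halflines_def)
  moreover have "\<forall>l1\<in>supporting_halflines f. \<forall>l2\<in>supporting_halflines f. \<not> halflines_cross l1 l2"
    using supporting_halflines_not_cross by fast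
  ultimately show ?thesis
    using \<open>inj_on f unit_disc\<close>
    unfolding close_to_convex_on_def close_to_convex_domain_def case_prod_beta by blast
qed

theorem theorem5:
  fixes \<gamma> \<delta> lam :: real and s t :: "complex \<Rightarrow> complex"
  assumes "0 \<le> lam" and "lam < \<gamma>" and "\<gamma> \<le> \<delta>"
    and "in_RH0 \<gamma> \<delta> lam s t"
  shows "close_to_convex_on (harm s t) unit_disc"
proof (rule close_to_convex_on_if_strictly_monotone)
  have "s holomorphic_on unit_disc" "t holomorphic_on unit_disc"
    using \<open>in_RH0 \<gamma> \<delta> lam s t\<close> by (auto simp: in_RH0_def in_H0_def)
  then show "continuous_on unit_disc (harm s t)"
    unfolding harm_def by (intro continuous_intros holomorphic_on_imp_continuous_on)
  show "inner (y - x) (harm s t y - harm s t x) > 0"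
    if "x \<in> unit_disc" "y \<in> unit_disc" "x \<noteq> y" for x y
    using \<open>s holomorphic_on unit_disc\<close> \<open>t holomorphic_on unit_disc\<close> that
      Re_deriv_gt_norm_deriv_if_in_RH0[OF assms]
    by (intro inner_diff_harm_pos[of unit_disc]) auto
qed

end
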